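(* In the layer stripping setup (see context), let $T(\mathbf a_0)$ and $T(\mathbf b_0)$ be the $n\times n$ lower triangular Toeplitz matrices with first columns $\mathbf a_0$ and $\mathbf b_0$, and $K:=T(\mathbf a_0)T(\mathbf a_0)^*+T(\mathbf b_0)T(\mathbf b_0)^*$. Let $L\in\mathbb C^{n\times n}$ be the unit lower triangular matrix with entries $L_{ij}=a_{i-j,\,j+1}/a_{0,\,j+1}$ for $0\le j\le i\le n-1$ (and $L_{ij}=0$ for $i<j$), and $D:=\mathrm{diag}(a_{0,1}^2,a_{0,2}^2,\dots,a_{0,n}^2)$. Then $K=LDL^*$, and the vector $\boldsymbol\gamma=(\gamma_0,\dots,\gamma_{n-1})^T$ satisfies $$L\boldsymbol\gamma=\frac{1}{a_{0,0}}\mathbf b_0.$$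
   Context: For a Laurent polynomial $a$, $a^*(z):=\overline{a(1/\overline z)}$; for a matrix, $^*$ is the conjugate transpose. $\mathcal S$ is the set of pairs $(a,b)$ of Laurent polynomials with $aa^*+bb^*=1$ and $0<a^*(0)<\infty$; the NLFT of $\boldsymbol\gamma$ supported in $[p,q]$ is $\prod_{k=p}^{q}\frac{1}{\sqrt{1+|\gamma_k|^2}}\begin{pmatrix}1&\gamma_k z^k\\-\overline{\gamma_k}z^{-k}&1\end{pmatrix}=\begin{pmatrix}a&b\\-b^*&a^*\end{pmatrix}$ (ordered by increasing $k$), a bijection onto $\mathcal S$. Layer stripping setup: let $n\ge1$ and $(a,b)\in\mathcal S$ with $b$ a polynomial of degree at most $n-1$. Set $a_0^*:=a^*$, $b_0:=b$, and for $k=0,\dots,n-1$ define recursively $\gamma_k:=b_k(0)/a_k^*(0)$, $a_{k+1}^*:=(a_k^*+\overline{\gamma_k}b_k)/\sqrt{1+|\gamma_k|^2}$, $b_{k+1}:=(b_k-\gamma_k a_k^* )/(z\sqrt{1+|\gamma_k|^2})$ (well defined; $a_k^*,b_k$ are polynomials of degree at most $n-1-k$ with $a_k^*(0)>0$). Write $a_k^*(z)=\sum_{j=0}^{n-1-k}a_{j,k}z^j$, $b_k(z)=\sum_{j=0}^{n-1-k}b_{j,k}z^j$, $\mathbf a_0:=(a_{0,0},\dots,a_{n-1,0})^T$, $\mathbf b_0:=(b_{0,0},\dots,b_{n-1,0})^T$; conventions $a_{n-k,k}:=0$ for $0\le k\le n-1$ and $a_{0,n}:=1$. *)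

theory Defs
  imports Complex_Main "Jordan_Normal_Form.Schur_Decomposition"
begin

text \<open>Laurent polynomials over the complex numbers, represented by their
  coefficient functions: f k is the coefficient of z^k (k an integer),
  with finite support.\<close>

definition laurent :: "(int \<Rightarrow> complex) \<Rightarrow> bool" where
  "laurent f \<longleftrightarrow> finite {k. f k \<noteq> 0}"

text \<open>a^*(z) = conj(a(1/conj z)): coefficient of z^k in a^* is conj of coefficient of z^(-k) in a.\<close>
definition lstar :: "(int \<Rightarrow> complex) \<Rightarrow> (int \<Rightarrow> complex)" where
  "lstar f = (\<lambda>k. cnj (f (- k)))"

definition lmult :: "(int \<Rightarrow> complex) \<Rightarrow> (int \<Rightarrow> complex) \<Rightarrow> (int \<Rightarrow> complex)" where
  "lmult f g = (\<lambda>m. \<Sum>k\<in>{k. f k \<noteq> 0}. f k * g (m - k))"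

definition lone :: "int \<Rightarrow> complex" where
  "lone = (\<lambda>k. if k = 0 then 1 else 0)"

text \<open>The condition a^*(0) < \<infinity>
  means a^* has no negative powers of z; then a^*(0) is its constant coefficient, which
  must be a positive real number.\<close>
definition S_class :: "((int \<Rightarrow> complex) \<times> (int \<Rightarrow> complex)) set" where
  "S_class = {(a, b). laurent a \<and> laurent b \<and>
      (\<lambda>m. lmult a (lstar a) m + lmult b (lstar b) m) = lone \<and>
      (\<forall>k<0. lstar a k = 0) \<and> Im (lstar a 0) = 0 \<and> 0 < Re (lstar a 0)}"

text \<open>One layer stripping step: from (a_k^*, b_k) to (a_{k+1}^*, b_{k+1}).
  gamma_k = b_k(0)/a_k^*(0); division by z is the index shift.\<close>
definition ls_gamma :: "(int \<Rightarrow> complex) \<times> (int \<Rightarrow> complex) \<Rightarrow> complex" where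
  "ls_gamma p = snd p 0 / fst p 0"

definition ls_step :: "(int \<Rightarrow> complex) \<times> (int \<Rightarrow> complex) \<Rightarrow> (int \<Rightarrow> complex) \<times> (int \<Rightarrow> complex)" where
  "ls_step p = (let g = ls_gamma p; s = complex_of_real (sqrt (1 + (cmod g)\<^sup>2)) in
     ((\<lambda>j. (fst p j + cnj g * snd p j) / s),
      (\<lambda>j. (snd p (j + 1) - g * fst p (j + 1)) / s)))"

text \<open>ls_seq a b k = (a_k^*, b_k), starting from (a_0^*, b_0) = (a^*, b).\<close>
primrec ls_seq :: "(int \<Rightarrow> complex) \<Rightarrow> (int \<Rightarrow> complex) \<Rightarrow> nat \<Rightarrow> (int \<Rightarrow> complex) \<times> (int \<Rightarrow> complex)" where
  "ls_seq a b 0 = (lstar a, b)"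
| "ls_seq a b (Suc k) = ls_step (ls_seq a b k)"

definition ls_gam :: "(int \<Rightarrow> complex) \<Rightarrow> (int \<Rightarrow> complex) \<Rightarrow> nat \<Rightarrow> complex" where
  "ls_gam a b k = ls_gamma (ls_seq a b k)"

text \<open>a_{j,k}: coefficient of z^j in a_k^*, with the convention a_{0,n} := 1.
  (The convention a_{n-k,k} := 0 agrees with the coefficient, since deg a_k^* \<le> n-1-k.)\<close>
definition acoef :: "nat \<Rightarrow> (int \<Rightarrow> complex) \<Rightarrow> (int \<Rightarrow> complex) \<Rightarrow> nat \<Rightarrow> nat \<Rightarrow> complex" where
  "acoef n a b j k = (if j = 0 \<and> k = n then 1 else fst (ls_seq a b k) (int j))"

definition bcoef :: "(int \<Rightarrow> complex) \<Rightarrow> (int \<Rightarrow> complex) \<Rightarrow> nat \<Rightarrow> nat \<Rightarrow> complex" where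
  "bcoef a b j k = snd (ls_seq a b k) (int j)"

definition lower_toeplitz :: "nat \<Rightarrow> complex vec \<Rightarrow> complex mat" where
  "lower_toeplitz n v = mat n n (\<lambda>(i, j). if j \<le> i then v $ (i - j) else 0)"

definition a0_vec :: "nat \<Rightarrow> (int \<Rightarrow> complex) \<Rightarrow> (int \<Rightarrow> complex) \<Rightarrow> complex vec" where
  "a0_vec n a b = vec n (\<lambda>j. acoef n a b j 0)"

definition b0_vec :: "nat \<Rightarrow> (int \<Rightarrow> complex) \<Rightarrow> (int \<Rightarrow> complex) \<Rightarrow> complex vec" where
  "b0_vec n a b = vec n (\<lambda>j. bcoef a b j 0)"

definition K_mat :: "nat \<Rightarrow> (int \<Rightarrow> complex) \<Rightarrow> (int \<Rightarrow> complex) \<Rightarrow> complex mat" where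
  "K_mat n a b = lower_toeplitz n (a0_vec n a b) * mat_adjoint (lower_toeplitz n (a0_vec n a b))
     + lower_toeplitz n (b0_vec n a b) * mat_adjoint (lower_toeplitz n (b0_vec n a b))"

definition L_mat :: "nat \<Rightarrow> (int \<Rightarrow> complex) \<Rightarrow> (int \<Rightarrow> complex) \<Rightarrow> complex mat" where
  "L_mat n a b = mat n n (\<lambda>(i, j). if j \<le> i then acoef n a b (i - j) (j + 1) / acoef n a b 0 (j + 1) else 0)"

definition D_mat :: "nat \<Rightarrow> (int \<Rightarrow> complex) \<Rightarrow> (int \<Rightarrow> complex) \<Rightarrow> complex mat" where
  "D_mat n a b = mat n n (\<lambda>(i, j). if i = j then (acoef n a b 0 (j + 1))\<^sup>2 else 0)"

definition gamma_vec :: "nat \<Rightarrow> (int \<Rightarrow> complex) \<Rightarrow> (int \<Rightarrow> complex) \<Rightarrow> complex vec" where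
  "gamma_vec n a b = vec n (\<lambda>k. ls_gam a b k)"

end

theory Submission
  imports Defs
begin

text \<open>One layer stripping step acts on each coefficient pair (a_k^*(j), b_k(j)) by the
  unitary matrix s^-1 [[1, conj gamma_k], [-gamma_k, 1]], s = sqrt (1 + |gamma_k|^2), followed by
  the shift j - 1 in b.  Hence T(a_k^*) T(a_k^*)^* + T(b_k) T(b_k)^* (T the lower triangular
  Toeplitz matrix) splits off the rank one term of the coefficient vector of a_(k+1)^* and leaves
  the same matrix for step k + 1, shifted by one row and column.  Starting from K this gives
  K = L D L^*, the columns of L D^(1/2) being the coefficient vectors of a_1^*, ..., a_n^*.
  Inverting one step expresses b_k / a_k^*(0) through gamma_k and b_(k+1) / a_(k+1)^*(0), which
  unrolls to L gamma = b_0 / a_(0,0).  The convention a_(0,n) = 1 is in fact a theorem: as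
  a a^* + b b^* = 1 and deg a^* < n, the last row of K is a unit vector, and peeling off rows
  carries this down to |a_n^*(0)|^2 = 1.\<close>

lemma rotation_inner_invariant:
  fixes x y u v g :: complex and s :: real
  assumes "s > 0" and "(complex_of_real s)\<^sup>2 = 1 + g * cnj g"
  shows "((x + cnj g * y) / s) * cnj ((u + cnj g * v) / s) + ((y - g * x) / s) * cnj ((v - g * u) / s)
       = x * cnj u + y * cnj v"
proof -
  have "((x + cnj g * y) / s) * cnj ((u + cnj g * v) / s) + ((y - g * x) / s) * cnj ((v - g * u) / s)
      = (x * cnj u + y * cnj v) * (1 + g * cnj g) / (complex_of_real s)\<^sup>2"
    using \<open>s > 0\<close> by (simp add: field_simps power2_eq_square)
  moreover have "1 + g * cnj g \<noteq> 0"
    unfolding assms(2)[symmetric] using \<open>s > 0\<close> by simp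
  ultimately show ?thesis using assms(2) by simp
qed

lemma rotation_recover_second:
  fixes x y g :: complex and s :: real
  assumes "s > 0" and "(complex_of_real s)\<^sup>2 = 1 + g * cnj g"
  shows "(g * ((x + cnj g * y) / s) + (y - g * x) / s) / s = y"
proof -
  have "(g * ((x + cnj g * y) / s) + (y - g * x) / s) / s = y * (1 + g * cnj g) / (complex_of_real s)\<^sup>2"
    using \<open>s > 0\<close> by (simp add: field_simps power2_eq_square)
  moreover have "1 + g * cnj g \<noteq> 0"
    unfolding assms(2)[symmetric] using \<open>s > 0\<close> by simp
  ultimately show ?thesis using assms(2) by simp
qed

definition ls_scale :: "(int \<Rightarrow> complex) \<times> (int \<Rightarrow> complex) \<Rightarrow> real" where
  "ls_scale p = sqrt (1 + (cmod (ls_gamma p))\<^sup>2)"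

lemma ls_scale_pos: "ls_scale p > 0"
  unfolding ls_scale_def by (simp add: add_pos_nonneg)

lemma ls_scale_square: "(complex_of_real (ls_scale p))\<^sup>2 = 1 + ls_gamma p * cnj (ls_gamma p)"
proof -
  have "(ls_scale p)\<^sup>2 = 1 + (cmod (ls_gamma p))\<^sup>2"
    unfolding ls_scale_def by (simp add: add_nonneg_nonneg)
  then show ?thesis
    by (metis complex_norm_square of_real_1 of_real_add of_real_power)
qed

lemma ls_step_fst: "fst (ls_step p) j = (fst p j + cnj (ls_gamma p) * snd p j) / ls_scale p"
  by (simp add: ls_step_def ls_scale_def Let_def)

lemma ls_step_snd: "snd (ls_step p) (j - 1) = (snd p j - ls_gamma p * fst p j) / ls_scale p"
  by (simp add: ls_step_def ls_scale_def Let_def)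

lemma ls_step_inner:
  "fst (ls_step p) x * cnj (fst (ls_step p) y) + snd (ls_step p) (x - 1) * cnj (snd (ls_step p) (y - 1))
   = fst p x * cnj (fst p y) + snd p x * cnj (snd p y)"
  unfolding ls_step_fst ls_step_snd by (rule rotation_inner_invariant[OF ls_scale_pos ls_scale_square])

lemma ls_step_recover_snd:
  "(ls_gamma p * fst (ls_step p) x + snd (ls_step p) (x - 1)) / ls_scale p = snd p x"
  unfolding ls_step_fst ls_step_snd by (rule rotation_recover_second[OF ls_scale_pos ls_scale_square])

lemma ls_step_real_pos:
  assumes a0: "fst p 0 = complex_of_real r" and "r > 0"
  shows "fst (ls_step p) 0 = complex_of_real (r * ls_scale p)" and "snd (ls_step p) (-1) = 0"
proof -
  let ?g = "ls_gamma p" and ?s = "complex_of_real (ls_scale p)"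
  have b0: "snd p 0 = r * ?g"
    using assms unfolding ls_gamma_def by simp
  have "fst (ls_step p) 0 = r * ?s\<^sup>2 / ?s"
    unfolding ls_step_fst a0 b0 ls_scale_square by (simp add: algebra_simps)
  also have "\<dots> = complex_of_real (r * ls_scale p)"
    using ls_scale_pos[of p] by (simp add: power2_eq_square)
  finally show "fst (ls_step p) 0 = complex_of_real (r * ls_scale p)" .
  show "snd (ls_step p) (-1) = 0"
    using ls_step_snd[of p 0] by (simp add: a0 b0)
qed

abbreviation ls_a :: "(int \<Rightarrow> complex) \<Rightarrow> (int \<Rightarrow> complex) \<Rightarrow> nat \<Rightarrow> int \<Rightarrow> complex" where
  "ls_a a b k \<equiv> fst (ls_seq a b k)"

abbreviation ls_b :: "(int \<Rightarrow> complex) \<Rightarrow> (int \<Rightarrow> complex) \<Rightarrow> nat \<Rightarrow> int \<Rightarrow> complex" where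
  "ls_b a b k \<equiv> snd (ls_seq a b k)"

declare ls_seq.simps(2) [simp del]

lemma ls_seq_inner:
  "ls_a a b (Suc k) x * cnj (ls_a a b (Suc k) y) + ls_b a b (Suc k) (x - 1) * cnj (ls_b a b (Suc k) (y - 1))
   = ls_a a b k x * cnj (ls_a a b k y) + ls_b a b k x * cnj (ls_b a b k y)"
  unfolding ls_seq.simps(2) by (rule ls_step_inner)

lemma ls_seq_recover_b:
  "(ls_gam a b k * ls_a a b (Suc k) x + ls_b a b (Suc k) (x - 1)) / ls_scale (ls_seq a b k) = ls_b a b k x"
  unfolding ls_seq.simps(2) ls_gam_def by (rule ls_step_recover_snd)

text \<open>Entry (i, j) of T(a_k^*) T(a_k^*)^* + T(b_k) T(b_k)^*, with T the (infinite) lower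
  triangular Toeplitz matrix; for k = 0 this is K.\<close>

definition ls_gram :: "(int \<Rightarrow> complex) \<Rightarrow> (int \<Rightarrow> complex) \<Rightarrow> nat \<Rightarrow> nat \<Rightarrow> nat \<Rightarrow> complex" where
  "ls_gram a b k i j = (\<Sum>t\<le>min i j. ls_a a b k (int (i - t)) * cnj (ls_a a b k (int (j - t)))
      + ls_b a b k (int (i - t)) * cnj (ls_b a b k (int (j - t))))"

locale layer_stripping =
  fixes a b :: "int \<Rightarrow> complex"
  assumes lstar_a_0_real: "Im (lstar a 0) = 0" and lstar_a_0_pos: "0 < Re (lstar a 0)"
begin

lemma ls_a_0_real_pos: "\<exists>r>0. ls_a a b k 0 = complex_of_real r"
proof (induction k)
  case 0
  show ?case
    using lstar_a_0_real lstar_a_0_pos by (intro exI[of _ "Re (lstar a 0)"]) (simp add: complex_eq_iff)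
next
  case (Suc k)
  then obtain r where "r > 0" "ls_a a b k 0 = complex_of_real r" by blast
  then show ?case
    using ls_step_real_pos(1)[of "ls_seq a b k"] ls_scale_pos[of "ls_seq a b k"]
    by (intro exI[of _ "r * ls_scale (ls_seq a b k)"]) (simp add: ls_seq.simps(2))
qed

lemma ls_a_0_nonzero: "ls_a a b k 0 \<noteq> 0"
  using ls_a_0_real_pos[of k] by auto

lemma ls_b_Suc_neg_one [simp]: "ls_b a b (Suc k) (-1) = 0"
  using ls_a_0_real_pos[of k] ls_step_real_pos(2)[of "ls_seq a b k"] by (auto simp: ls_seq.simps(2))

lemma ls_a_0_Suc: "ls_a a b (Suc k) 0 = ls_a a b k 0 * ls_scale (ls_seq a b k)"
  using ls_a_0_real_pos[of k] ls_step_real_pos(1)[of "ls_seq a b k"] by (auto simp: ls_seq.simps(2))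

lemma ls_gram_Suc:
  "ls_gram a b k i j = ls_a a b (Suc k) (int i) * cnj (ls_a a b (Suc k) (int j))
     + (if i = 0 \<or> j = 0 then 0 else ls_gram a b (Suc k) (i - 1) (j - 1))"
proof -
  define F where "F t = ls_a a b (Suc k) (int (i - t)) * cnj (ls_a a b (Suc k) (int (j - t)))" for t
  define G where "G t = ls_b a b (Suc k) (int (i - t) - 1) * cnj (ls_b a b (Suc k) (int (j - t) - 1))" for t
  have split: "ls_gram a b k i j = (\<Sum>t\<le>min i j. F t) + (\<Sum>t\<le>min i j. G t)"
    unfolding ls_gram_def F_def G_def ls_seq_inner[symmetric] by (simp add: sum.distrib)
  show ?thesis
  proof (cases "i = 0 \<or> j = 0")
    case True
    then have "min i j = 0" and "G 0 = 0" unfolding G_def by auto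
    with True split show ?thesis unfolding F_def by simp
  next
    case False
    then obtain i' j' where ij: "i = Suc i'" "j = Suc j'" by (meson not0_implies_Suc)
    define m where "m = min i' j'"
    have mm: "min i j = Suc m" using ij m_def by simp
    \<comment> \<open>the last b-term sits at index -1, where b_(k+1) vanishes\<close>
    have "G (Suc m) = 0" using ij m_def unfolding G_def by (cases "i' \<le> j'") (auto simp: min_def)
    then have "(\<Sum>t\<le>min i j. G t) = (\<Sum>t\<le>m. G t)" unfolding mm by simp
    moreover have "(\<Sum>t\<le>min i j. F t) = F 0 + (\<Sum>t\<le>m. F (Suc t))"
      unfolding mm by (rule sum.atMost_Suc_shift)
    moreover have "ls_gram a b (Suc k) (i - 1) (j - 1) = (\<Sum>t\<le>m. F (Suc t)) + (\<Sum>t\<le>m. G t)"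
      unfolding ls_gram_def F_def G_def m_def ij sum.distrib[symmetric]
      by (rule sum.cong) (auto simp: of_nat_diff)
    ultimately show ?thesis using split False unfolding F_def by simp
  qed
qed

lemma ls_gram_eq_sum:
  "ls_gram a b k i j = (\<Sum>t\<le>min i j. ls_a a b (k + t + 1) (int (i - t)) * cnj (ls_a a b (k + t + 1) (int (j - t))))"
proof (induction i arbitrary: k j)
  case 0
  show ?case using ls_gram_Suc[of k 0 j] by simp
next
  case (Suc i)
  show ?case
  proof (cases j)
    case 0
    then show ?thesis using ls_gram_Suc[of k "Suc i" j] by simp
  next
    case (Suc j')
    have "ls_gram a b k (Suc i) j
        = ls_a a b (Suc k) (int (Suc i)) * cnj (ls_a a b (Suc k) (int j)) + ls_gram a b (Suc k) i j'"
      using ls_gram_Suc[of k "Suc i" j] Suc by simp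
    also have "\<dots> = (\<Sum>t\<le>Suc (min i j'). ls_a a b (k + t + 1) (int (Suc i - t))
        * cnj (ls_a a b (k + t + 1) (int (j - t))))"
      unfolding Suc.IH sum.atMost_Suc_shift using Suc by (simp del: sum.atMost_Suc)
    finally show ?thesis using Suc by simp
  qed
qed

lemma ls_gram_unit_row_Suc:
  assumes row: "\<forall>j\<le>d. ls_gram a b k d j = (if j = d then 1 else 0)" and "d \<ge> 1"
  shows "\<forall>j\<le>d - 1. ls_gram a b (Suc k) (d - 1) j = (if j = d - 1 then 1 else 0)"
proof -
  \<comment> \<open>entry (d, 0) forces a_(k+1)^*(d) = 0, so peeling off a_(k+1)^* just shifts the row\<close>
  have "ls_a a b (Suc k) (int d) * cnj (ls_a a b (Suc k) 0) = 0"
    using ls_gram_Suc[of k d 0] row \<open>d \<ge> 1\<close> by simp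
  then have top: "ls_a a b (Suc k) (int d) = 0"
    using ls_a_0_nonzero by simp
  show ?thesis
  proof (intro allI impI)
    fix j assume "j \<le> d - 1"
    then show "ls_gram a b (Suc k) (d - 1) j = (if j = d - 1 then 1 else 0)"
      using ls_gram_Suc[of k d "Suc j"] row[rule_format, of "Suc j"] top \<open>d \<ge> 1\<close>
      by (cases "Suc j = d") auto
  qed
qed

lemma ls_gram_unit_row:
  assumes "\<forall>j\<le>d. ls_gram a b 0 d j = (if j = d then 1 else 0)"
  shows "ls_a a b (Suc d) 0 = 1"
proof -
  have "k \<le> d \<Longrightarrow> \<forall>j\<le>d - k. ls_gram a b k (d - k) j = (if j = d - k then 1 else 0)" for k
  proof (induction k)
    case (Suc k)
    then have "\<forall>j\<le>d - k. ls_gram a b k (d - k) j = (if j = d - k then 1 else 0)" and "d - k \<ge> 1"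
      by auto
    moreover have "d - Suc k = d - k - 1" by simp
    ultimately show ?case
      using ls_gram_unit_row_Suc by presburger
  qed (use assms in simp)
  from this[of d] have "ls_gram a b d 0 0 = 1" by simp
  moreover obtain r where "r > 0" and r: "ls_a a b (Suc d) 0 = complex_of_real r"
    using ls_a_0_real_pos by blast
  ultimately have "complex_of_real (r\<^sup>2) = 1"
    using ls_gram_Suc[of d 0 0] by (simp add: power2_eq_square)
  then have "r\<^sup>2 = 1"
    by (simp only: of_real_eq_1_iff)
  with \<open>r > 0\<close> show ?thesis
    unfolding r power2_eq_1_iff by auto
qed

lemma ls_b_div_a_expansion:
  "ls_b a b k (int i) / ls_a a b k 0
   = (\<Sum>t\<le>i. ls_gam a b (k + t) * ls_a a b (k + t + 1) (int (i - t)) / ls_a a b (k + t + 1) 0)"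
proof (induction i arbitrary: k)
  case 0
  show ?case using ls_a_0_nonzero[of "Suc k"] by (simp add: ls_gam_def ls_gamma_def)
next
  case (Suc i)
  let ?s = "complex_of_real (ls_scale (ls_seq a b k))"
  have "?s \<noteq> 0" using ls_scale_pos[of "ls_seq a b k"] by simp
  then have "ls_b a b k (int (Suc i)) / ls_a a b k 0
      = (ls_gam a b k * ls_a a b (Suc k) (int (Suc i)) + ls_b a b (Suc k) (int i)) / ls_a a b (Suc k) 0"
    using ls_seq_recover_b[of a b k "int (Suc i)", symmetric] ls_a_0_Suc[of k] by simp
  also have "\<dots> = ls_gam a b k * ls_a a b (Suc k) (int (Suc i)) / ls_a a b (Suc k) 0
      + ls_b a b (Suc k) (int i) / ls_a a b (Suc k) 0"
    by (simp add: add_divide_distrib)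
  finally show ?case
    unfolding Suc.IH[of "Suc k"] sum.atMost_Suc_shift by simp
qed

end

lemma lstar_lstar [simp]: "lstar (lstar f) = f"
  by (simp add: lstar_def)

lemma laurent_lstar: "laurent f \<Longrightarrow> laurent (lstar f)"
proof -
  assume "laurent f"
  have "{k. lstar f k \<noteq> 0} = uminus ` {k. f k \<noteq> 0}"
    by (auto simp: lstar_def image_iff) (metis minus_minus)
  with \<open>laurent f\<close> show ?thesis unfolding laurent_def by simp
qed

lemma lmult_eq_sum_over:
  assumes "laurent f" and "finite I" and "\<And>k. k \<notin> I \<Longrightarrow> f k * g (m - k) = 0"
  shows "lmult f g m = (\<Sum>k\<in>I. f k * g (m - k))"
proof -
  have "lmult f g m = (\<Sum>k\<in>{k. f k \<noteq> 0} \<union> I. f k * g (m - k))"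
    unfolding lmult_def using assms unfolding laurent_def by (intro sum.mono_neutral_left) auto
  also have "\<dots> = (\<Sum>k\<in>I. f k * g (m - k))"
    using assms unfolding laurent_def by (intro sum.mono_neutral_right) auto
  finally show ?thesis .
qed

lemma lmult_commute:
  assumes "laurent f" and "laurent g"
  shows "lmult f g = lmult g f"
proof
  fix m
  have reflect: "finite {k. h (m - k) \<noteq> 0}" if "laurent h" for h :: "int \<Rightarrow> complex"
    using finite_vimageI[of "{k. h k \<noteq> 0}" "\<lambda>k. m - k"] that unfolding laurent_def
    by (simp add: inj_on_def vimage_def)
  let ?A = "{k. f k \<noteq> 0} \<union> {k. g (m - k) \<noteq> 0}" and ?B = "{k. g k \<noteq> 0} \<union> {k. f (m - k) \<noteq> 0}"
  have "finite ?A" and "finite ?B"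
    using assms reflect[OF assms(1)] reflect[OF assms(2)] unfolding laurent_def by auto
  have "lmult f g m = (\<Sum>k\<in>?A. f k * g (m - k))"
    using assms(1) \<open>finite ?A\<close> by (rule lmult_eq_sum_over) auto
  also have "\<dots> = (\<Sum>k\<in>?B. g k * f (m - k))"
    by (rule sum.reindex_bij_witness[of _ "\<lambda>k. m - k" "\<lambda>k. m - k"]) auto
  also have "\<dots> = lmult g f m"
    using assms(2) \<open>finite ?B\<close> by (intro lmult_eq_sum_over[symmetric]) auto
  finally show "lmult f g m = lmult g f m" .
qed

text \<open>The right-hand side is entry (N, j) of T(f) T(f)^*.\<close>

lemma lmult_lstar_coeff:
  assumes supp: "\<And>k. k < 0 \<or> k > int N \<Longrightarrow> f k = 0" and "j \<le> N"
  shows "lmult f (lstar f) (int N - int j) = (\<Sum>t\<le>j. f (int (N - t)) * cnj (f (int (j - t))))"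
proof -
  have "{k. f k \<noteq> 0} \<subseteq> {0..int N}"
    using supp by (force simp: not_le)
  then have "laurent f"
    unfolding laurent_def by (rule finite_subset) simp
  moreover have "f k * lstar f (int N - int j - k) = 0" if "k \<notin> {int N - int j..int N}" for k
  proof -
    from that have "k > int N \<or> k - (int N - int j) < 0" by auto
    then show ?thesis
      using supp[of k] supp[of "k - (int N - int j)"] unfolding lstar_def by auto
  qed
  ultimately have "lmult f (lstar f) (int N - int j) = (\<Sum>k\<in>{int N - int j..int N}. f k * lstar f (int N - int j - k))"
    by (intro lmult_eq_sum_over) auto
  also have "\<dots> = (\<Sum>t\<le>j. f (int N - int t) * lstar f (int N - int j - (int N - int t)))"
    by (rule sum.reindex_bij_witness[of _ "\<lambda>t. int N - int t" "\<lambda>k. nat (int N - k)"]) auto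
  also have "\<dots> = (\<Sum>t\<le>j. f (int (N - t)) * cnj (f (int (j - t))))"
    using \<open>j \<le> N\<close> by (intro sum.cong) (auto simp: lstar_def of_nat_diff)
  finally show ?thesis .
qed

lemma S_class_lstar_degree:
  assumes S: "(a, b) \<in> S_class" and b_supp: "\<forall>k. (k < 0 \<or> k > int n - 1) \<longrightarrow> b k = 0"
    and "n \<ge> 1" and "d \<ge> int n"
  shows "lstar a d = 0"
proof (rule ccontr)
  assume "lstar a d \<noteq> 0"
  let ?f = "lstar a" and ?S = "{k. lstar a k \<noteq> 0}"
  have "laurent ?f" and neg: "\<forall>k<0. ?f k = 0" and "?f 0 \<noteq> 0"
    and unit: "\<And>m. lmult a ?f m + lmult b (lstar b) m = lone m"
    using S laurent_lstar unfolding S_class_def by (auto simp: fun_eq_iff)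
  have "finite ?S" using \<open>laurent ?f\<close> unfolding laurent_def .
  define D where "D = Max ?S"
  have "D \<in> ?S"
    using \<open>finite ?S\<close> \<open>?f d \<noteq> 0\<close> unfolding D_def by (intro Max_in) auto
  have "D \<ge> d" and above: "\<And>k. k > D \<Longrightarrow> ?f k = 0"
    using \<open>finite ?S\<close> \<open>?f d \<noteq> 0\<close> unfolding D_def by (auto intro: Max_ge simp: not_le[symmetric])
  define N where "N = nat D"
  have "int N = D" using \<open>D \<ge> d\<close> \<open>d \<ge> int n\<close> unfolding N_def by simp
  have f_supp: "\<And>k. k < 0 \<or> k > int N \<Longrightarrow> ?f k = 0"
    using neg above \<open>int N = D\<close> by auto
  \<comment> \<open>the top coefficient of a a^* is a^*(N) conj (a^*(0)), and b b^* has none there\<close>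
  have "lmult a ?f (int N) = ?f (int N) * cnj (?f 0)"
    using lmult_lstar_coeff[where f = ?f and N = N and j = 0, OF f_supp] S
    unfolding S_class_def by (simp add: lmult_commute laurent_lstar)
  moreover have "lmult b (lstar b) (int N) = 0"
  proof -
    have "\<And>k. k < 0 \<or> k > int N \<Longrightarrow> b k = 0" and "b (int N) = 0"
      using b_supp \<open>int N = D\<close> \<open>D \<ge> d\<close> \<open>d \<ge> int n\<close> by auto
    then show ?thesis
      using lmult_lstar_coeff[where f = b and N = N and j = 0] by simp
  qed
  moreover have "lone (int N) = 0"
    using \<open>int N = D\<close> \<open>D \<ge> d\<close> \<open>d \<ge> int n\<close> \<open>n \<ge> 1\<close> unfolding lone_def by auto
  ultimately show False
    using unit[of "int N"] \<open>?f 0 \<noteq> 0\<close> \<open>int N = D\<close> \<open>D \<in> ?S\<close> by simp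
qed

lemma S_class_ls_gram_last_row:
  assumes S: "(a, b) \<in> S_class" and b_supp: "\<forall>k. (k < 0 \<or> k > int n - 1) \<longrightarrow> b k = 0"
    and "n \<ge> 1" and "j \<le> n - 1"
  shows "ls_gram a b 0 (n - 1) j = (if j = n - 1 then 1 else 0)"
proof -
  have "laurent a" and unit: "\<And>m. lmult a (lstar a) m + lmult b (lstar b) m = lone m"
    and neg: "\<forall>k<0. lstar a k = 0"
    using S unfolding S_class_def by (auto simp: fun_eq_iff)
  have a_supp: "\<And>k. k < 0 \<or> k > int (n - 1) \<Longrightarrow> lstar a k = 0"
    using neg S_class_lstar_degree[OF S b_supp \<open>n \<ge> 1\<close>] \<open>n \<ge> 1\<close> by force
  have b_supp': "\<And>k. k < 0 \<or> k > int (n - 1) \<Longrightarrow> b k = 0"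
    using b_supp \<open>n \<ge> 1\<close> by force
  let ?m = "int (n - 1) - int j"
  have "lmult (lstar a) a ?m = (\<Sum>t\<le>j. lstar a (int (n - 1 - t)) * cnj (lstar a (int (j - t))))"
    using lmult_lstar_coeff[where f = "lstar a", OF a_supp \<open>j \<le> n - 1\<close>] by simp
  moreover have "lmult b (lstar b) ?m = (\<Sum>t\<le>j. b (int (n - 1 - t)) * cnj (b (int (j - t))))"
    using lmult_lstar_coeff[where f = b, OF b_supp' \<open>j \<le> n - 1\<close>] .
  ultimately have "ls_gram a b 0 (n - 1) j = lmult (lstar a) a ?m + lmult b (lstar b) ?m"
    unfolding ls_gram_def using \<open>j \<le> n - 1\<close> by (simp add: sum.distrib min_def)
  also have "\<dots> = lone ?m"
    using unit lmult_commute[OF \<open>laurent a\<close> laurent_lstar[OF \<open>laurent a\<close>]] by simp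
  finally show ?thesis
    using \<open>j \<le> n - 1\<close> unfolding lone_def by auto
qed

lemma S_class_layer_stripping: "(a, b) \<in> S_class \<Longrightarrow> layer_stripping a"
  unfolding S_class_def by unfold_locales auto

lemma S_class_ls_a_last:
  assumes "(a, b) \<in> S_class" and "\<forall>k. (k < 0 \<or> k > int n - 1) \<longrightarrow> b k = 0" and "n \<ge> 1"
  shows "ls_a a b n 0 = 1"
proof -
  interpret layer_stripping a using assms(1) by (rule S_class_layer_stripping)
  have "ls_a a b (Suc (n - 1)) 0 = 1"
    using S_class_ls_gram_last_row[OF assms] by (intro ls_gram_unit_row) simp
  with \<open>n \<ge> 1\<close> show ?thesis by simp
qed

lemma mat_adjoint_mat: "mat_adjoint (mat m n f) = mat n m (\<lambda>(i, j). cnj (f (j, i)))"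
  unfolding mat_adjoint_def mat_of_rows_def by (rule eq_matI) auto

lemma mat_mult_mat: "mat m n f * mat n p g = mat m p (\<lambda>(i, j). \<Sum>k<n. f (i, k) * g (k, j))"
  by (rule eq_matI) (auto simp: scalar_prod_def atLeast0LessThan)

lemma lower_toeplitz_mult_adjoint_index:
  assumes "i < n" and "j < n"
  shows "(lower_toeplitz n v * mat_adjoint (lower_toeplitz n v)) $$ (i, j)
       = (\<Sum>t\<le>min i j. v $ (i - t) * cnj (v $ (j - t)))"
proof -
  have "(lower_toeplitz n v * mat_adjoint (lower_toeplitz n v)) $$ (i, j)
      = (\<Sum>t<n. (if t \<le> i then v $ (i - t) else 0) * cnj (if t \<le> j then v $ (j - t) else 0))"
    using assms unfolding lower_toeplitz_def mat_adjoint_mat mat_mult_mat by simp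
  also have "\<dots> = (\<Sum>t\<le>min i j. (if t \<le> i then v $ (i - t) else 0) * cnj (if t \<le> j then v $ (j - t) else 0))"
    using assms by (intro sum.mono_neutral_right) auto
  finally show ?thesis by simp
qed

lemma lower_triangular_diagonal_adjoint_index:
  assumes "i < n" and "j < n" and lower: "\<And>i k. i < k \<Longrightarrow> l (i, k) = 0"
  shows "(mat n n l * mat n n (\<lambda>(i, j). if i = j then d j else 0) * mat_adjoint (mat n n l)) $$ (i, j)
       = (\<Sum>k\<le>min i j. l (i, k) * d k * cnj (l (j, k)))"
proof -
  have "(mat n n l * mat n n (\<lambda>(i, j). if i = j then d j else 0) * mat_adjoint (mat n n l)) $$ (i, j)
      = (\<Sum>k<n. l (i, k) * d k * cnj (l (j, k)))"
    using assms(1,2) unfolding mat_adjoint_mat mat_mult_mat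
    by (simp add: if_distrib[of "\<lambda>x. _ * x"] sum.If_cases)
  also have "\<dots> = (\<Sum>k\<le>min i j. l (i, k) * d k * cnj (l (j, k)))"
    using assms by (intro sum.mono_neutral_right) auto
  finally show ?thesis .
qed

lemma K_mat_index:
  assumes "i < n" and "j < n"
  shows "K_mat n a b $$ (i, j) = ls_gram a b 0 i j"
proof -
  have "\<And>x. x < n \<Longrightarrow> a0_vec n a b $ x = ls_a a b 0 (int x)"
    and "\<And>x. x < n \<Longrightarrow> b0_vec n a b $ x = ls_b a b 0 (int x)"
    unfolding a0_vec_def b0_vec_def acoef_def bcoef_def by auto
  moreover have "K_mat n a b $$ (i, j)
      = (lower_toeplitz n (a0_vec n a b) * mat_adjoint (lower_toeplitz n (a0_vec n a b))) $$ (i, j)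
      + (lower_toeplitz n (b0_vec n a b) * mat_adjoint (lower_toeplitz n (b0_vec n a b))) $$ (i, j)"
    unfolding K_mat_def
    by (rule index_add_mat(1)) (use assms in \<open>simp_all add: lower_toeplitz_def mat_adjoint_mat\<close>)
  ultimately show ?thesis
    using assms unfolding ls_gram_def by (simp add: lower_toeplitz_mult_adjoint_index sum.distrib)
qed

lemma acoef_eq_ls_a:
  assumes "ls_a a b n 0 = 1" and "k \<le> n"
  shows "acoef n a b j k = ls_a a b k (int j)"
  using assms unfolding acoef_def by auto

context layer_stripping
begin

lemma K_mat_eq_LDL:
  assumes "ls_a a b n 0 = 1"
  shows "K_mat n a b = L_mat n a b * D_mat n a b * mat_adjoint (L_mat n a b)"
proof (rule eq_matI)
  fix i j
  assume "i < dim_row (L_mat n a b * D_mat n a b * mat_adjoint (L_mat n a b))"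
    and "j < dim_col (L_mat n a b * D_mat n a b * mat_adjoint (L_mat n a b))"
  then have "i < n" and "j < n" by (simp_all add: L_mat_def mat_adjoint_mat)
  have "(L_mat n a b * D_mat n a b * mat_adjoint (L_mat n a b)) $$ (i, j)
      = (\<Sum>k\<le>min i j. (acoef n a b (i - k) (k + 1) / acoef n a b 0 (k + 1)) * (acoef n a b 0 (k + 1))\<^sup>2
          * cnj (acoef n a b (j - k) (k + 1) / acoef n a b 0 (k + 1)))"
    unfolding L_mat_def D_mat_def using \<open>i < n\<close> \<open>j < n\<close>
    by (subst lower_triangular_diagonal_adjoint_index) auto
  also have "\<dots> = (\<Sum>k\<le>min i j. ls_a a b (k + 1) (int (i - k)) * cnj (ls_a a b (k + 1) (int (j - k))))"
  proof (rule sum.cong)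
    fix k assume "k \<in> {..min i j}"
    then have "k + 1 \<le> n" using \<open>i < n\<close> by simp
    \<comment> \<open>a_(k+1)^*(0) is real, so its square in D cancels the two divisions in L and L^*\<close>
    obtain r where "r > 0" "ls_a a b (k + 1) 0 = complex_of_real r"
      using ls_a_0_real_pos by blast
    with \<open>k + 1 \<le> n\<close> show "(acoef n a b (i - k) (k + 1) / acoef n a b 0 (k + 1)) * (acoef n a b 0 (k + 1))\<^sup>2
          * cnj (acoef n a b (j - k) (k + 1) / acoef n a b 0 (k + 1))
        = ls_a a b (k + 1) (int (i - k)) * cnj (ls_a a b (k + 1) (int (j - k)))"
      by (simp add: acoef_eq_ls_a[OF assms] power2_eq_square)
  qed simp
  also have "\<dots> = K_mat n a b $$ (i, j)"
    using \<open>i < n\<close> \<open>j < n\<close> by (simp add: K_mat_index ls_gram_eq_sum)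
  finally show "K_mat n a b $$ (i, j) = (L_mat n a b * D_mat n a b * mat_adjoint (L_mat n a b)) $$ (i, j)" ..
qed (simp_all add: K_mat_def L_mat_def lower_toeplitz_def mat_adjoint_mat)

lemma L_mat_mult_gamma_vec:
  assumes "ls_a a b n 0 = 1"
  shows "L_mat n a b *\<^sub>v gamma_vec n a b = (1 / acoef n a b 0 0) \<cdot>\<^sub>v b0_vec n a b"
proof (rule eq_vecI)
  fix i assume "i < dim_vec ((1 / acoef n a b 0 0) \<cdot>\<^sub>v b0_vec n a b)"
  then have "i < n" by (simp add: b0_vec_def)
  then have "(L_mat n a b *\<^sub>v gamma_vec n a b) $ i
      = (\<Sum>k<n. (if k \<le> i then ls_a a b (k + 1) (int (i - k)) / ls_a a b (k + 1) 0 else 0) * ls_gam a b k)"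
    unfolding L_mat_def gamma_vec_def
    by (auto simp: scalar_prod_def atLeast0LessThan acoef_eq_ls_a[OF assms] intro!: sum.cong)
  also have "\<dots> = (\<Sum>k\<le>i. ls_gam a b k * ls_a a b (k + 1) (int (i - k)) / ls_a a b (k + 1) 0)"
    using \<open>i < n\<close> by (intro sum.mono_neutral_cong_right) auto
  also have "\<dots> = ls_b a b 0 (int i) / ls_a a b 0 0"
    using ls_b_div_a_expansion[of 0 i] by simp
  also have "\<dots> = ((1 / acoef n a b 0 0) \<cdot>\<^sub>v b0_vec n a b) $ i"
    using \<open>i < n\<close> by (simp add: acoef_eq_ls_a[OF assms] b0_vec_def bcoef_def)
  finally show "(L_mat n a b *\<^sub>v gamma_vec n a b) $ i = ((1 / acoef n a b 0 0) \<cdot>\<^sub>v b0_vec n a b) $ i" .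
qed (simp add: L_mat_def gamma_vec_def b0_vec_def)

end

theorem lemma5p3:
  fixes n :: nat and a b :: "int \<Rightarrow> complex"
  assumes "n \<ge> 1"
    and "(a, b) \<in> S_class"
    and "\<forall>k. (k < 0 \<or> k > int n - 1) \<longrightarrow> b k = 0"
  shows "K_mat n a b = L_mat n a b * D_mat n a b * mat_adjoint (L_mat n a b)
    \<and> L_mat n a b *\<^sub>v gamma_vec n a b = (1 / acoef n a b 0 0) \<cdot>\<^sub>v b0_vec n a b"
proof -
  interpret layer_stripping a using assms(2) by (rule S_class_layer_stripping)
  have "ls_a a b n 0 = 1"
    using assms(2,3,1) by (rule S_class_ls_a_last)
  then show ?thesis
    using K_mat_eq_LDL L_mat_mult_gamma_vec by blast
qed

end
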